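(* Let $P$ be a sum-free $\pi$-calculus process. If there exists a $C_\pi$ process $Q$ such that $P\sim Q$, then $P$ satisfies the non-forwarding property.
   Context: The Confidential $\pi$-calculus $C_\pi$. There are two disjoint countable sets: ${\cal V}$ of variables (ranged over by $x,y,z,\dots$) and ${\cal C}$ of channels (ranged over by $k,l,m,n,\dots$). Let ${\cal N}={\cal V}\cup{\cal C}$, ranged over by $a,b,c,\dots$. Prefixes: $\pi ::= \overline{a}\langle k\rangle \mid a(x) \mid [a=b]\pi$. Processes: $P ::= 0 \mid \pi.P \mid P\,|\,P \mid (\nu k)P \mid\, !P$. The object of an output is always a channel, and the bound object of an input is always a variable. In $(\nu k)P$ the channel $k$ is bound, and in $a(x).P$ the variable $x$ is bound, with scope $P$. The sets $\mathrm{fn}(P)$, $\mathrm{bn}(P)$ and $\mathrm{n}(P)$ are the free, bound and all names of $P$. The sum-free (monadic) $\pi$-calculus has the same syntax, except that any name may occur as the object of an output prefix, and any name may be bound by an input. Thus $C_\pi$ processes are exactly the $\pi$-calculus processes in which no input-bound name is ever the object of an output. Processes are identified up to $\alpha$-conversion. Actions: $\alpha ::= \overline{k}\langle l\rangle \mid k(l) \mid (\nu l)\overline{k}\langle l\rangle \mid \tau$. We have $\mathrm{fn}(\overline{k}\langle l\rangle)=\mathrm{fn}(k(l))=\{k,l\}$, $\mathrm{fn}((\nu l)\overline{k}\langle l\rangle)=\{k\}$, $\mathrm{bn}((\nu l)\overline{k}\langle l\rangle)=\{l\}$, all other bound-name sets are empty, and $\mathrm{n}(\alpha)=\mathrm{fn}(\alpha)\cup\mathrm{bn}(\alpha)$.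 The labelled transition relation is the standard early $\pi$-calculus LTS, which restricts on $C_\pi$ processes to the following rules: - (out) $\overline{k}\langle l\rangle.P \xrightarrow{\overline{k}\langle l\rangle} P$. - (in) $k(x).P \xrightarrow{k(l)} P\{l/x\}$. - (match) If $\pi.P\xrightarrow{\alpha}P'$, then $[a=a]\pi.P\xrightarrow{\alpha}P'$. - (res) If $P\xrightarrow{\alpha}P'$ and $k\notin\mathrm{n}(\alpha)$, then $(\nu k)P\xrightarrow{\alpha}(\nu k)P'$. - (open) If $P\xrightarrow{\overline{k}\langle l\rangle}Q$ and $k\neq l$, then $(\nu l)P\xrightarrow{(\nu l)\overline{k}\langle l\rangle}Q$. - (par-l) If $P\xrightarrow{\alpha}Q$ and $\mathrm{bn}(\alpha)\cap\mathrm{fn}(R)=\emptyset$, then $P|R\xrightarrow{\alpha}Q|R$. - (comm-l) If $P\xrightarrow{\overline{k}\langle l\rangle}P'$ and $Q\xrightarrow{k(l)}Q'$, then $P|Q\xrightarrow{\tau}P'|Q'$. - (close-l) If $P\xrightarrow{(\nu l)\overline{k}\langle l\rangle}P'$, $Q\xrightarrow{k(l)}Q'$ and $l\notin\mathrm{fn}(Q)$, then $P|Q\xrightarrow{\tau}(\nu l)(P'|Q')$. - The symmetric rules (par-r), (comm-r), (close-r). - (rep-act) If $P\xrightarrow{\alpha}P'$, then $!P\xrightarrow{\alpha}P'|!P$. - (rep-comm) If $P\xrightarrow{\overline{k}\langle l\rangle}P'$ and $P\xrightarrow{k(l)}P''$, then $!P\xrightarrow{\tau}(P'|P'')|!P$.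 - (rep-close) If $P\xrightarrow{(\nu l)\overline{k}\langle l\rangle}P'$, $P\xrightarrow{k(l)}P''$ and $l\notin\mathrm{fn}(P)$, then $!P\xrightarrow{\tau}(\nu l)(P'|P'')|!P$. Strong bisimilarity $\sim$ (on all $\pi$-calculus processes, including $C_\pi$ processes) is the largest symmetric binary relation such that whenever $P\sim Q$ and $P\xrightarrow{\alpha}P'$ with $\mathrm{bn}(\alpha)\cap\mathrm{fn}(Q)=\emptyset$, there exists $Q'$ with $Q\xrightarrow{\alpha}Q'$ and $P'\sim Q'$. Non-forwarding property: a process $P_1$ satisfies it if, for every transition sequence $P_1\xrightarrow{\alpha_1}P_2\xrightarrow{\alpha_2}\cdots\xrightarrow{\alpha_m}P_{m+1}$ (with bound outputs chosen fresh), the following holds: whenever $l\notin\mathrm{fn}(P_i)$ and $\alpha_i=k(l)$ for some $i\in\{1,\dots,m-1\}$, then $\alpha_j\neq\overline{k'}\langle l\rangle$ for every $k'$ and every $j=i+1,\dots,m$. *)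

theory Defs
  imports Main
begin

datatype name = Var nat | Chan nat

fun is_chan :: "name \<Rightarrow> bool" where
  "is_chan (Chan _) = True" | "is_chan (Var _) = False"

definition same_sort :: "name \<Rightarrow> name \<Rightarrow> bool" where
  "same_sort a b \<longleftrightarrow> (is_chan a \<longleftrightarrow> is_chan b)"

section \<open>Raw syntax (processes are later identified up to alpha-conversion)\<close>

datatype prefix =
    Out name name
  | In name name             (* a(x), x bound in the continuation *)
  | Match name name prefix

datatype proc =
    Nil
  | Pre prefix proc
  | Par proc proc
  | Res name proc
  | Bang proc

fun pre_fn :: "prefix \<Rightarrow> name set" where
  "pre_fn (Out a b) = {a, b}"
| "pre_fn (In a x) = {a}"
| "pre_fn (Match a b p) = {a, b} \<union> pre_fn p"

fun pre_bn :: "prefix \<Rightarrow> name set" where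
  "pre_bn (Out a b) = {}"
| "pre_bn (In a x) = {x}"
| "pre_bn (Match a b p) = pre_bn p"

fun fnP :: "proc \<Rightarrow> name set" where
  "fnP Nil = {}"
| "fnP (Pre p P) = pre_fn p \<union> (fnP P - pre_bn p)"
| "fnP (Par P Q) = fnP P \<union> fnP Q"
| "fnP (Res k P) = fnP P - {k}"
| "fnP (Bang P) = fnP P"

fun bnP :: "proc \<Rightarrow> name set" where
  "bnP Nil = {}"
| "bnP (Pre p P) = pre_bn p \<union> bnP P"
| "bnP (Par P Q) = bnP P \<union> bnP Q"
| "bnP (Res k P) = insert k (bnP P)"
| "bnP (Bang P) = bnP P"

fun pre_cpi :: "prefix \<Rightarrow> bool" where
  "pre_cpi (Out a b) = is_chan b"
| "pre_cpi (In a x) = (\<not> is_chan x)"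
| "pre_cpi (Match a b p) = pre_cpi p"

fun pi_proc :: "proc \<Rightarrow> bool" where
  "pi_proc Nil = True"
| "pi_proc (Pre p P) = pi_proc P"
| "pi_proc (Par P Q) = (pi_proc P \<and> pi_proc Q)"
| "pi_proc (Res k P) = (is_chan k \<and> pi_proc P)"
| "pi_proc (Bang P) = pi_proc P"

fun cpi_proc :: "proc \<Rightarrow> bool" where
  "cpi_proc Nil = True"
| "cpi_proc (Pre p P) = (pre_cpi p \<and> cpi_proc P)"
| "cpi_proc (Par P Q) = (cpi_proc P \<and> cpi_proc Q)"
| "cpi_proc (Res k P) = (is_chan k \<and> cpi_proc P)"
| "cpi_proc (Bang P) = cpi_proc P"

definition swapN :: "name \<Rightarrow> name \<Rightarrow> name \<Rightarrow> name" where
  "swapN a b c = (if c = a then b else if c = b then a else c)"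

fun swap_pre :: "name \<Rightarrow> name \<Rightarrow> prefix \<Rightarrow> prefix" where
  "swap_pre a b (Out c d) = Out (swapN a b c) (swapN a b d)"
| "swap_pre a b (In c x) = In (swapN a b c) (swapN a b x)"
| "swap_pre a b (Match c d p) = Match (swapN a b c) (swapN a b d) (swap_pre a b p)"

fun swapP :: "name \<Rightarrow> name \<Rightarrow> proc \<Rightarrow> proc" where
  "swapP a b Nil = Nil"
| "swapP a b (Pre p P) = Pre (swap_pre a b p) (swapP a b P)"
| "swapP a b (Par P Q) = Par (swapP a b P) (swapP a b Q)"
| "swapP a b (Res k P) = Res (swapN a b k) (swapP a b P)"
| "swapP a b (Bang P) = Bang (swapP a b P)"

fun set_binder :: "prefix \<Rightarrow> name \<Rightarrow> prefix" where
  "set_binder (Out a b) y = Out a b"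
| "set_binder (In a x) y = In a y"
| "set_binder (Match a b p) y = Match a b (set_binder p y)"

inductive alpha :: "proc \<Rightarrow> proc \<Rightarrow> bool" where
  a_nil: "alpha Nil Nil"
| a_pre: "alpha P P' \<Longrightarrow> alpha (Pre p P) (Pre p P')"
| a_par: "alpha P P' \<Longrightarrow> alpha Q Q' \<Longrightarrow> alpha (Par P Q) (Par P' Q')"
| a_res: "alpha P P' \<Longrightarrow> alpha (Res k P) (Res k P')"
| a_bang: "alpha P P' \<Longrightarrow> alpha (Bang P) (Bang P')"
| a_res_ren: "same_sort k k' \<Longrightarrow> k' \<notin> fnP P \<Longrightarrow>
     alpha (Res k P) (Res k' (swapP k k' P))"
| a_in_ren: "pre_bn p = {x} \<Longrightarrow> same_sort x y \<Longrightarrow> y \<notin> fnP P \<Longrightarrow>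
     alpha (Pre p P) (Pre (set_binder p y) (swapP x y P))"
| a_sym: "alpha P Q \<Longrightarrow> alpha Q P"
| a_trans: "alpha P Q \<Longrightarrow> alpha Q R \<Longrightarrow> alpha P R"

text \<open>Substitution of the name l for the free occurrences of x (capture is ruled out
  by the side condition of the input rule; alpha-conversion makes that harmless).\<close>

definition substN :: "name \<Rightarrow> name \<Rightarrow> name \<Rightarrow> name" where
  "substN x l a = (if a = x then l else a)"

fun subst_pre :: "name \<Rightarrow> name \<Rightarrow> prefix \<Rightarrow> prefix" where
  "subst_pre x l (Out a b) = Out (substN x l a) (substN x l b)"
| "subst_pre x l (In a y) = In (substN x l a) y"
| "subst_pre x l (Match a b p) = Match (substN x l a) (substN x l b) (subst_pre x l p)"

fun substP :: "name \<Rightarrow> name \<Rightarrow> proc \<Rightarrow> proc" where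
  "substP x l Nil = Nil"
| "substP x l (Pre p P) =
     Pre (subst_pre x l p) (if x \<in> pre_bn p then P else substP x l P)"
| "substP x l (Par P Q) = Par (substP x l P) (substP x l Q)"
| "substP x l (Res k P) = (if k = x then Res k P else Res k (substP x l P))"
| "substP x l (Bang P) = Bang (substP x l P)"

datatype act =
    OutA name name
  | InA name name
  | BOutA name name
  | Tau

fun fnA :: "act \<Rightarrow> name set" where
  "fnA (OutA k l) = {k, l}"
| "fnA (InA k l) = {k, l}"
| "fnA (BOutA k l) = {k}"
| "fnA Tau = {}"

fun bnA :: "act \<Rightarrow> name set" where
  "bnA (BOutA k l) = {l}"
| "bnA _ = {}"

definition nA :: "act \<Rightarrow> name set" where
  "nA a = fnA a \<union> bnA a"

inductive trans :: "proc \<Rightarrow> act \<Rightarrow> proc \<Rightarrow> bool" where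
  t_out: "is_chan k \<Longrightarrow> is_chan l \<Longrightarrow> trans (Pre (Out k l) P) (OutA k l) P"
| t_in: "is_chan k \<Longrightarrow> is_chan l \<Longrightarrow> l \<notin> bnP P \<Longrightarrow>
     trans (Pre (In k x) P) (InA k l) (substP x l P)"
| t_match: "trans (Pre p P) a P' \<Longrightarrow> trans (Pre (Match c c p) P) a P'"
| t_res: "trans P a P' \<Longrightarrow> k \<notin> nA a \<Longrightarrow> trans (Res k P) a (Res k P')"
| t_open: "trans P (OutA k l) Q \<Longrightarrow> k \<noteq> l \<Longrightarrow> trans (Res l P) (BOutA k l) Q"
| t_parl: "trans P a Q \<Longrightarrow> bnA a \<inter> fnP R = {} \<Longrightarrow> trans (Par P R) a (Par Q R)"
| t_parr: "trans P a Q \<Longrightarrow> bnA a \<inter> fnP R = {} \<Longrightarrow> trans (Par R P) a (Par R Q)"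
| t_comml: "trans P (OutA k l) P' \<Longrightarrow> trans Q (InA k l) Q' \<Longrightarrow> trans (Par P Q) Tau (Par P' Q')"
| t_commr: "trans P (OutA k l) P' \<Longrightarrow> trans Q (InA k l) Q' \<Longrightarrow> trans (Par Q P) Tau (Par Q' P')"
| t_closel: "trans P (BOutA k l) P' \<Longrightarrow> trans Q (InA k l) Q' \<Longrightarrow> l \<notin> fnP Q \<Longrightarrow>
     trans (Par P Q) Tau (Res l (Par P' Q'))"
| t_closer: "trans P (BOutA k l) P' \<Longrightarrow> trans Q (InA k l) Q' \<Longrightarrow> l \<notin> fnP Q \<Longrightarrow>
     trans (Par Q P) Tau (Res l (Par Q' P'))"
| t_rep_act: "trans P a P' \<Longrightarrow> trans (Bang P) a (Par P' (Bang P))"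
| t_rep_comm: "trans P (OutA k l) P' \<Longrightarrow> trans P (InA k l) P'' \<Longrightarrow>
     trans (Bang P) Tau (Par (Par P' P'') (Bang P))"
| t_rep_close: "trans P (BOutA k l) P' \<Longrightarrow> trans P (InA k l) P'' \<Longrightarrow> l \<notin> fnP P \<Longrightarrow>
     trans (Bang P) Tau (Par (Res l (Par P' P'')) (Bang P))"
| t_alpha: "alpha P P1 \<Longrightarrow> trans P1 a Q1 \<Longrightarrow> alpha Q1 Q \<Longrightarrow> trans P a Q"

definition bisimulation :: "(proc \<times> proc) set \<Rightarrow> bool" where
  "bisimulation R \<longleftrightarrow> sym R \<and>
     (\<forall>(P, Q) \<in> R. \<forall>a P'. trans P a P' \<and> bnA a \<inter> fnP Q = {} \<longrightarrow>
        (\<exists>Q'. trans Q a Q' \<and> (P', Q') \<in> R))"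

definition bisim :: "proc \<Rightarrow> proc \<Rightarrow> bool" (infix "\<sim>\<^sub>\<pi>" 50) where
  "P \<sim>\<^sub>\<pi> Q \<longleftrightarrow> (\<exists>R. bisimulation R \<and> (P, Q) \<in> R)"

text \<open>A transition sequence P_1 -a_1-> ... -a_m-> P_(m+1) is given by lists ps (length m+1)
  and as (length m), 0-indexed.\<close>

definition trans_seq :: "proc list \<Rightarrow> act list \<Rightarrow> bool" where
  "trans_seq ps as \<longleftrightarrow> length ps = Suc (length as) \<and>
     (\<forall>i < length as. trans (ps ! i) (as ! i) (ps ! Suc i))"

definition bouts_fresh :: "proc list \<Rightarrow> act list \<Rightarrow> bool" where
  "bouts_fresh ps as \<longleftrightarrow>
     (\<forall>j k l. j < length as \<and> as ! j = BOutA k l \<longrightarrow>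
        (\<forall>i \<le> j. l \<notin> fnP (ps ! i)) \<and> (\<forall>i < j. l \<notin> nA (as ! i)))"

definition non_forwarding :: "proc \<Rightarrow> bool" where
  "non_forwarding P1 \<longleftrightarrow>
     (\<forall>ps as. trans_seq ps as \<and> ps ! 0 = P1 \<and> bouts_fresh ps as \<longrightarrow>
        (\<forall>i k l. Suc i < length as \<and> l \<notin> fnP (ps ! i) \<and> as ! i = InA k l \<longrightarrow>
           (\<forall>j k'. i < j \<and> j < length as \<longrightarrow> as ! j \<noteq> OutA k' l)))"

end

theory Submission
  imports Defs
begin

text \<open>In a C_pi process the object of every output is a channel that occurs free as the
  object of an output prefix: input-bound variables never reach object position, so input
  substitution creates no new output objects, and a transition can add one only by extruding
  a restricted channel.  Suppose P \<sim> Q with Q in C_pi, and P receives a name l that is not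
  free in P.  Since bisimilarity is preserved by renaming names not free in P, we may rename
  Q so that l is not free in it either.  From then on every C_pi process bisimilar to the
  current derivative can be chosen without l among its output objects, because all names
  extruded later are fresh and hence differ from l.  So no derivative of P ever outputs l.\<close>

section \<open>Equivariance under swapping of names\<close>

lemma swapN_same [simp]: "swapN a a c = c"
  by (simp add: swapN_def)

lemma swapN_inv [simp]: "swapN a b (swapN a b c) = c"
  by (simp add: swapN_def)

lemma swapN_sym: "swapN a b c = swapN b a c"
  by (simp add: swapN_def)

lemma swapN_inj [simp]: "swapN a b c = swapN a b d \<longleftrightarrow> c = d"
  by (auto simp: swapN_def)

lemma swapN_left [simp]: "swapN a b a = b"
  by (simp add: swapN_def)

lemma swapN_right [simp]: "swapN a b b = a"
  by (simp add: swapN_def)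

lemma swapN_fresh [simp]: "c \<noteq> a \<Longrightarrow> c \<noteq> b \<Longrightarrow> swapN a b c = c"
  by (simp add: swapN_def)

lemma swapN_swapN: "swapN m n (swapN k k' c) = swapN (swapN m n k) (swapN m n k') (swapN m n c)"
  by (auto simp: swapN_def)

lemma is_chan_swapN: "same_sort a b \<Longrightarrow> is_chan (swapN a b c) = is_chan c"
  by (simp add: swapN_def same_sort_def)

lemma same_sort_swapN: "same_sort a b \<Longrightarrow> same_sort (swapN a b c) (swapN a b d) = same_sort c d"
  by (simp add: same_sort_def is_chan_swapN)

lemma same_sort_sym: "same_sort a b \<Longrightarrow> same_sort b a"
  by (auto simp: same_sort_def)

lemma swapN_image_mem [simp]: "swapN a b c \<in> swapN a b ` S \<longleftrightarrow> c \<in> S"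
  by auto

fun swapA :: "name \<Rightarrow> name \<Rightarrow> act \<Rightarrow> act" where
  "swapA a b (OutA k l) = OutA (swapN a b k) (swapN a b l)"
| "swapA a b (InA k l) = InA (swapN a b k) (swapN a b l)"
| "swapA a b (BOutA k l) = BOutA (swapN a b k) (swapN a b l)"
| "swapA a b Tau = Tau"

lemma swap_pre_inv [simp]: "swap_pre a b (swap_pre a b p) = p"
  by (induction p) auto

lemma swapP_inv [simp]: "swapP a b (swapP a b P) = P"
  by (induction P) auto

lemma swapA_inv [simp]: "swapA a b (swapA a b x) = x"
  by (cases x) auto

lemma swap_pre_same [simp]: "swap_pre a a p = p"
  by (induction p) auto

lemma swapP_same [simp]: "swapP a a P = P"
  by (induction P) auto

lemma swap_pre_sym: "swap_pre a b p = swap_pre b a p"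
  by (induction p) (auto simp: swapN_sym)

lemma swapP_sym: "swapP a b P = swapP b a P"
  by (induction P) (auto simp: swapN_sym swap_pre_sym)

lemma swap_pre_swap_pre:
  "swap_pre m n (swap_pre k k' p) = swap_pre (swapN m n k) (swapN m n k') (swap_pre m n p)"
  by (induction p) (simp_all add: swapN_swapN[of m n k k'])

lemma swapP_swapP:
  "swapP m n (swapP k k' P) = swapP (swapN m n k) (swapN m n k') (swapP m n P)"
  by (induction P) (simp_all add: swap_pre_swap_pre[of m n k k'] swapN_swapN[of m n k k'])

lemma pre_fn_swap [simp]: "pre_fn (swap_pre a b p) = swapN a b ` pre_fn p"
  by (induction p) auto

lemma pre_bn_swap [simp]: "pre_bn (swap_pre a b p) = swapN a b ` pre_bn p"
  by (induction p) auto

lemma fnP_swap [simp]: "fnP (swapP a b P) = swapN a b ` fnP P"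
  by (induction P) (auto simp: image_Un)

lemma bnP_swap [simp]: "bnP (swapP a b P) = swapN a b ` bnP P"
  by (induction P) (auto simp: image_Un)

lemma fnA_swap [simp]: "fnA (swapA a b x) = swapN a b ` fnA x"
  by (cases x) auto

lemma bnA_swap [simp]: "bnA (swapA a b x) = swapN a b ` bnA x"
  by (cases x) auto

lemma nA_swap [simp]: "nA (swapA a b x) = swapN a b ` nA x"
  by (simp add: nA_def image_Un)

lemma swap_set_binder: "swap_pre a b (set_binder p y) = set_binder (swap_pre a b p) (swapN a b y)"
  by (induction p) auto

lemma swap_substN: "swapN a b (substN x l c) = substN (swapN a b x) (swapN a b l) (swapN a b c)"
  by (simp add: substN_def)

lemma swap_subst_pre:
  "swap_pre a b (subst_pre x l p) = subst_pre (swapN a b x) (swapN a b l) (swap_pre a b p)"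
  by (induction p) (auto simp: swap_substN)

lemma swap_substP:
  "swapP a b (substP x l P) = substP (swapN a b x) (swapN a b l) (swapP a b P)"
  by (induction P) (auto simp: swap_subst_pre)

lemma pre_cpi_swap: "same_sort a b \<Longrightarrow> pre_cpi (swap_pre a b p) = pre_cpi p"
  by (induction p) (auto simp: is_chan_swapN)

lemma cpi_proc_swap: "same_sort a b \<Longrightarrow> cpi_proc (swapP a b P) = cpi_proc P"
  by (induction P) (auto simp: is_chan_swapN pre_cpi_swap)

section \<open>Output objects\<close>

fun pre_out_fn :: "prefix \<Rightarrow> name set" where
  "pre_out_fn (Out a b) = {b}"
| "pre_out_fn (In a x) = {}"
| "pre_out_fn (Match a b p) = pre_out_fn p"

fun out_fnP :: "proc \<Rightarrow> name set" where
  "out_fnP Nil = {}"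
| "out_fnP (Pre p P) = pre_out_fn p \<union> (out_fnP P - pre_bn p)"
| "out_fnP (Par P Q) = out_fnP P \<union> out_fnP Q"
| "out_fnP (Res k P) = out_fnP P - {k}"
| "out_fnP (Bang P) = out_fnP P"

lemma pre_out_fn_subset_pre_fn: "pre_out_fn p \<subseteq> pre_fn p"
  by (induction p) auto

lemma out_fnP_subset_fnP: "out_fnP P \<subseteq> fnP P"
  by (induction P) (use pre_out_fn_subset_pre_fn in auto)

lemma pre_out_fn_swap [simp]: "pre_out_fn (swap_pre a b p) = swapN a b ` pre_out_fn p"
  by (induction p) auto

lemma out_fnP_swap [simp]: "out_fnP (swapP a b P) = swapN a b ` out_fnP P"
  by (induction P) (auto simp: image_Un)

lemma pre_cpi_out_fn_chan: "pre_cpi p \<Longrightarrow> c \<in> pre_out_fn p \<Longrightarrow> is_chan c"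
  by (induction p) auto

lemma cpi_out_fnP_chan: "cpi_proc P \<Longrightarrow> c \<in> out_fnP P \<Longrightarrow> is_chan c"
  by (induction P) (auto dest: pre_cpi_out_fn_chan)

lemma pre_cpi_subst: "is_chan l \<Longrightarrow> pre_cpi p \<Longrightarrow> pre_cpi (subst_pre x l p)"
  by (induction p) (auto simp: substN_def)

lemma cpi_proc_subst: "is_chan l \<Longrightarrow> cpi_proc P \<Longrightarrow> cpi_proc (substP x l P)"
  by (induction P) (auto simp: pre_cpi_subst)

lemma pre_bn_subst [simp]: "pre_bn (subst_pre x l p) = pre_bn p"
  by (induction p) auto

lemma pre_out_fn_subst: "\<not> is_chan x \<Longrightarrow> pre_cpi p \<Longrightarrow> pre_out_fn (subst_pre x l p) = pre_out_fn p"
  by (induction p) (auto simp: substN_def)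

lemma out_fnP_subst: "\<not> is_chan x \<Longrightarrow> cpi_proc P \<Longrightarrow> out_fnP (substP x l P) \<subseteq> out_fnP P"
  by (induction P) (auto simp: pre_out_fn_subst)

lemma alpha_refl [simp, intro]: "alpha P P"
  by (induction P) (auto intro: alpha.intros)

lemma pre_bn_cases: "pre_bn p = {} \<or> (\<exists>x. pre_bn p = {x})"
  by (induction p) auto

lemma pre_bn_set_binder: "pre_bn p = {x} \<Longrightarrow> pre_bn (set_binder p y) = {y}"
  by (induction p) auto

lemma pre_fn_set_binder [simp]: "pre_fn (set_binder p y) = pre_fn p"
  by (induction p) auto

lemma pre_out_fn_set_binder [simp]: "pre_out_fn (set_binder p y) = pre_out_fn p"
  by (induction p) auto

lemma pre_cpi_set_binder:
  "pre_bn p = {x} \<Longrightarrow> same_sort x y \<Longrightarrow> pre_cpi (set_binder p y) = pre_cpi p"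
  by (induction p) (auto simp: same_sort_def)

lemma set_binder_same: "pre_bn p = {x} \<Longrightarrow> set_binder p x = p"
  by (induction p) auto

lemma swapN_image_fresh_diff: "y \<notin> S \<Longrightarrow> swapN x y ` S - {y} = S - {x}"
  by (auto simp: swapN_def)

lemma alpha_invariants:
  "alpha P Q \<Longrightarrow> fnP P = fnP Q \<and> out_fnP P = out_fnP Q \<and> cpi_proc P = cpi_proc Q"
proof (induction rule: alpha.induct)
  case (a_res_ren k k' P)
  then have "k' \<notin> out_fnP P" using out_fnP_subset_fnP by blast
  with a_res_ren show ?case
    by (auto simp: swapN_image_fresh_diff cpi_proc_swap same_sort_def)
next
  case (a_in_ren p x y P)
  then have "y \<notin> out_fnP P" using out_fnP_subset_fnP by blast
  with a_in_ren show ?case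
    by (simp add: pre_bn_set_binder swapN_image_fresh_diff cpi_proc_swap pre_cpi_set_binder)
qed auto

lemma alpha_swap:
  assumes "alpha P Q" "same_sort m n"
  shows "alpha (swapP m n P) (swapP m n Q)"
  using assms(1)
proof (induction rule: alpha.induct)
  case (a_res_ren k k' P)
  have "alpha (Res (swapN m n k) (swapP m n P))
          (Res (swapN m n k') (swapP (swapN m n k) (swapN m n k') (swapP m n P)))"
    using a_res_ren assms(2) by (intro alpha.a_res_ren) (auto simp: same_sort_swapN)
  then show ?case by (simp add: swapP_swapP[of m n k k'])
next
  case (a_in_ren p x y P)
  have "alpha (Pre (swap_pre m n p) (swapP m n P))
          (Pre (set_binder (swap_pre m n p) (swapN m n y))
               (swapP (swapN m n x) (swapN m n y) (swapP m n P)))"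
    using a_in_ren assms(2) by (intro alpha.a_in_ren) (auto simp: same_sort_swapN)
  then show ?case by (simp add: swapP_swapP[of m n x y] swap_set_binder)
qed (auto intro: alpha.intros)

lemma swap_pre_fresh_free:
  "m \<notin> pre_fn p \<Longrightarrow> m' \<notin> pre_fn p \<Longrightarrow> pre_bn p = {} \<Longrightarrow> swap_pre m m' p = p"
  by (induction p) auto

lemma swap_pre_fresh_bound:
  "m \<notin> pre_fn p \<Longrightarrow> m' \<notin> pre_fn p \<Longrightarrow> pre_bn p = {x} \<Longrightarrow>
   swap_pre m m' p = set_binder p (swapN m m' x)"
  by (induction p) auto

lemma alpha_Pre_swap_fresh:
  assumes "same_sort m m'" "m \<notin> fnP (Pre p P)" "m' \<notin> fnP (Pre p P)"
    and "m \<notin> fnP P \<Longrightarrow> m' \<notin> fnP P \<Longrightarrow> alpha P (swapP m m' P)"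
  shows "alpha (Pre p P) (swapP m m' (Pre p P))"
proof -
  have fresh: "m \<notin> pre_fn p" "m' \<notin> pre_fn p" using assms(2,3) by auto
  consider (free) "pre_bn p = {}" | (bound) x where "pre_bn p = {x}"
    using pre_bn_cases by blast
  then show ?thesis
  proof cases
    case free
    then show ?thesis using assms swap_pre_fresh_free[OF fresh] by (auto intro: alpha.a_pre)
  next
    case bound
    note swap_p = swap_pre_fresh_bound[OF fresh bound]
    consider "m = m'" | "x = m" "m \<noteq> m'" | "x = m'" "m \<noteq> m'" | "x \<noteq> m" "x \<noteq> m'"
      by blast
    then show ?thesis
    proof cases
      case 2
      then show ?thesis using swap_p bound assms by (auto intro!: alpha.a_in_ren)
    next
      case 3
      have "alpha (Pre p P) (Pre (set_binder p m) (swapP m' m P))"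
        using 3 bound assms by (auto intro!: alpha.a_in_ren same_sort_sym)
      then show ?thesis using swap_p 3 by (simp add: swapP_sym)
    next
      case 4
      then have "alpha P (swapP m m' P)" using assms bound by auto
      then show ?thesis using swap_p 4 set_binder_same[OF bound] by (auto intro: alpha.a_pre)
    qed simp
  qed
qed

lemma alpha_Res_swap_fresh:
  assumes "same_sort m m'" "m \<notin> fnP (Res k P)" "m' \<notin> fnP (Res k P)"
    and "m \<notin> fnP P \<Longrightarrow> m' \<notin> fnP P \<Longrightarrow> alpha P (swapP m m' P)"
  shows "alpha (Res k P) (swapP m m' (Res k P))"
proof -
  consider "m = m'" | "k = m" "m \<noteq> m'" | "k = m'" "m \<noteq> m'" | "k \<noteq> m" "k \<noteq> m'"
    by blast
  then show ?thesis
  proof cases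
    case 2
    then show ?thesis using assms by (auto intro!: alpha.a_res_ren)
  next
    case 3
    have "alpha (Res k P) (Res m (swapP m' m P))"
      using 3 assms by (auto intro!: alpha.a_res_ren same_sort_sym)
    then show ?thesis using 3 by (simp add: swapP_sym)
  next
    case 4
    then show ?thesis using assms by (auto intro: alpha.a_res)
  qed simp
qed

lemma alpha_swap_fresh:
  "same_sort m m' \<Longrightarrow> m \<notin> fnP P \<Longrightarrow> m' \<notin> fnP P \<Longrightarrow> alpha P (swapP m m' P)"
proof (induction P)
  case (Pre p P)
  then show ?case by (intro alpha_Pre_swap_fresh)
next
  case (Res k P)
  then show ?case by (intro alpha_Res_swap_fresh)
qed (auto intro: alpha.intros)

lemma swapN_image_disjoint: "A \<inter> B = {} \<Longrightarrow> swapN m n ` A \<inter> swapN m n ` B = {}"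
  by auto

lemma trans_swap:
  assumes "trans P a Q" "same_sort m n"
  shows "trans (swapP m n P) (swapA m n a) (swapP m n Q)"
  using assms(1)
proof (induction rule: trans.induct)
  case (t_alpha P P1 a Q1 Q)
  then show ?case using alpha_swap[OF _ assms(2)] trans.t_alpha by blast
next
  case (t_in k l P x)
  then show ?case using assms(2) by (auto simp: swap_substP is_chan_swapN intro!: trans.t_in)
next
  case (t_parl P a Q R)
  then show ?case by (simp, intro trans.t_parl) (auto simp: swapN_image_disjoint)
next
  case (t_parr P a Q R)
  then show ?case by (simp, intro trans.t_parr) (auto simp: swapN_image_disjoint)
qed (use assms(2) in \<open>auto simp: is_chan_swapN image_Int[symmetric] intro: trans.intros\<close>)

lemma trans_object_chan:
  "trans P a Q \<Longrightarrow> a \<in> {OutA k l, InA k l, BOutA k l} \<Longrightarrow> is_chan l"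
  by (induction arbitrary: k l rule: trans.induct) auto

lemma trans_OutA_out_fnP: "trans P (OutA k l) Q \<Longrightarrow> l \<in> out_fnP P"
proof (induction P "OutA k l" Q rule: trans.induct)
  case (t_alpha P P1 Q1 Q)
  then show ?case using alpha_invariants by blast
qed (auto simp: nA_def)

lemma cpi_trans:
  "trans P a Q \<Longrightarrow> cpi_proc P \<Longrightarrow> cpi_proc Q \<and> out_fnP Q \<subseteq> out_fnP P \<union> bnA a"
proof (induction rule: trans.induct)
  case (t_in k l P x)
  then have var: "\<not> is_chan x" and cpi: "cpi_proc P" by auto
  have "x \<notin> out_fnP P" using cpi_out_fnP_chan[OF cpi] var by blast
  then show ?case using out_fnP_subst[OF var cpi] cpi_proc_subst t_in cpi by auto
next
  case (t_alpha P P1 a Q1 Q)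
  then show ?case using alpha_invariants by metis
qed (auto dest: trans_object_chan)

lemma bisim_step:
  "P \<sim>\<^sub>\<pi> Q \<Longrightarrow> trans P a P' \<Longrightarrow> bnA a \<inter> fnP Q = {} \<Longrightarrow> \<exists>Q'. trans Q a Q' \<and> P' \<sim>\<^sub>\<pi> Q'"
  unfolding bisim_def bisimulation_def by blast

lemma bisim_alpha_left:
  assumes "alpha P0 P" "P \<sim>\<^sub>\<pi> Q"
  shows "P0 \<sim>\<^sub>\<pi> Q"
proof -
  obtain R where R: "bisimulation R" "(P, Q) \<in> R" using assms(2) by (auto simp: bisim_def)
  define R' where "R' = {(A, B). \<exists>A0 B0. alpha A A0 \<and> (A0, B0) \<in> R \<and> alpha B0 B}"
  have "sym R'"
    using R(1) unfolding R'_def sym_def bisimulation_def by (blast intro: alpha.a_sym)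
  moreover have "\<exists>B'. trans B a B' \<and> (A', B') \<in> R'"
    if "(A, B) \<in> R'" "trans A a A'" "bnA a \<inter> fnP B = {}" for A B a A'
  proof -
    from that obtain A0 B0 where h: "alpha A A0" "(A0, B0) \<in> R" "alpha B0 B"
      by (auto simp: R'_def)
    have "trans A0 a A'" using trans.t_alpha[OF alpha.a_sym[OF h(1)] that(2) alpha_refl] .
    moreover have "bnA a \<inter> fnP B0 = {}" using that(3) alpha_invariants[OF h(3)] by simp
    ultimately obtain B' where B': "trans B0 a B'" "(A', B') \<in> R"
      using R(1) h(2) unfolding bisimulation_def by blast
    have "trans B a B'" using trans.t_alpha[OF alpha.a_sym[OF h(3)] B'(1) alpha_refl] .
    with B'(2) show ?thesis unfolding R'_def by blast
  qed
  ultimately have "bisimulation R'" unfolding bisimulation_def by blast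
  moreover have "(P0, Q) \<in> R'" unfolding R'_def using assms(1) R(2) by blast
  ultimately show ?thesis by (auto simp: bisim_def)
qed

lemma bisim_swap:
  assumes "same_sort m n" "P \<sim>\<^sub>\<pi> Q"
  shows "swapP m n P \<sim>\<^sub>\<pi> swapP m n Q"
proof -
  obtain R where R: "bisimulation R" "(P, Q) \<in> R" using assms(2) by (auto simp: bisim_def)
  define R' where "R' = (\<lambda>(A, B). (swapP m n A, swapP m n B)) ` R"
  have "sym R'" using R(1) unfolding R'_def sym_def bisimulation_def by auto
  moreover have "\<exists>B'. trans B a B' \<and> (A', B') \<in> R'"
    if "(A, B) \<in> R'" "trans A a A'" "bnA a \<inter> fnP B = {}" for A B a A'
  proof -
    from that obtain A0 B0 where h: "(A0, B0) \<in> R" "A = swapP m n A0" "B = swapP m n B0"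
      by (auto simp: R'_def)
    have "trans A0 (swapA m n a) (swapP m n A')"
      using trans_swap[OF that(2) assms(1)] h(2) by simp
    moreover have "bnA (swapA m n a) \<inter> fnP B0 = {}"
      using swapN_image_disjoint[OF that(3), of m n] h(3) by (simp add: image_image)
    ultimately obtain B' where B': "trans B0 (swapA m n a) B'" "(swapP m n A', B') \<in> R"
      using R(1) h(1) unfolding bisimulation_def by blast
    have "trans B a (swapP m n B')" using trans_swap[OF B'(1) assms(1)] h(3) by simp
    moreover have "(A', swapP m n B') \<in> R'"
      unfolding R'_def using B'(2) by (auto intro!: image_eqI[where x = "(swapP m n A', B')"])
    ultimately show ?thesis by blast
  qed
  ultimately have "bisimulation R'" unfolding bisimulation_def by blast
  moreover have "(swapP m n P, swapP m n Q) \<in> R'" unfolding R'_def using R(2) by force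
  ultimately show ?thesis by (auto simp: bisim_def)
qed

lemma bisim_swap_right:
  assumes "P \<sim>\<^sub>\<pi> Q" "same_sort m m'" "m \<notin> fnP P" "m' \<notin> fnP P"
  shows "P \<sim>\<^sub>\<pi> swapP m m' Q"
  using bisim_alpha_left[OF alpha_swap_fresh[OF assms(2-4)] bisim_swap[OF assms(2,1)]] .

lemma finite_pre_fn: "finite (pre_fn p)"
  by (induction p) auto

lemma finite_fnP: "finite (fnP P)"
  by (induction P) (auto simp: finite_pre_fn)

lemma ex_fresh_chan: "finite S \<Longrightarrow> \<exists>c. is_chan c \<and> c \<notin> S"
proof -
  assume "finite S"
  then have "finite (Chan -` S)" by (rule finite_vimageI) (simp add: inj_on_def)
  then obtain n where "n \<notin> Chan -` S" using ex_new_if_finite[OF infinite_UNIV_nat] by blast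
  then show ?thesis by (intro exI[of _ "Chan n"]) auto
qed

lemma bisim_cpi_rename_away:
  assumes "P \<sim>\<^sub>\<pi> Q" "cpi_proc Q" "L \<inter> out_fnP Q = {}" "finite L" "is_chan m" "m \<notin> fnP P"
  obtains Q' where "P \<sim>\<^sub>\<pi> Q'" "cpi_proc Q'" "L \<inter> out_fnP Q' = {}" "m \<notin> fnP Q'"
proof -
  obtain m' where m': "is_chan m'" "m' \<notin> fnP P \<union> fnP Q \<union> L \<union> {m}"
    using ex_fresh_chan[of "fnP P \<union> fnP Q \<union> L \<union> {m}"] finite_fnP assms(4) by auto
  have sort: "same_sort m m'" using assms(5) m'(1) by (simp add: same_sort_def)
  show thesis
  proof
    show "P \<sim>\<^sub>\<pi> swapP m m' Q" using bisim_swap_right[OF assms(1) sort assms(6)] m' by auto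
    show "cpi_proc (swapP m m' Q)" using cpi_proc_swap[OF sort] assms(2) by simp
    show "L \<inter> out_fnP (swapP m m' Q) = {}"
      using assms(3) m'(2) out_fnP_subset_fnP by (auto simp: swapN_def)
    show "m \<notin> fnP (swapP m m' Q)" using m'(2) by (auto simp: swapN_def)
  qed
qed

definition cpi_bisim_avoiding :: "name set \<Rightarrow> proc \<Rightarrow> bool" where
  "cpi_bisim_avoiding L P \<longleftrightarrow> (\<exists>Q. P \<sim>\<^sub>\<pi> Q \<and> cpi_proc Q \<and> L \<inter> out_fnP Q = {})"

lemma cpi_bisim_avoiding_trans:
  assumes "cpi_bisim_avoiding L P" "trans P a P'" "finite L"
    and fresh: "\<And>k m. a = BOutA k m \<Longrightarrow> m \<notin> fnP P \<and> m \<notin> L"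
  shows "cpi_bisim_avoiding L P'"
proof -
  obtain Q where Q: "P \<sim>\<^sub>\<pi> Q" "cpi_proc Q" "L \<inter> out_fnP Q = {}"
    using assms(1) by (auto simp: cpi_bisim_avoiding_def)
  obtain Q1 where Q1: "P \<sim>\<^sub>\<pi> Q1" "cpi_proc Q1" "bnA a \<inter> fnP Q1 = {}" "L \<inter> out_fnP Q1 = {}"
  proof (cases a)
    case (BOutA k m)
    have "is_chan m" using trans_object_chan[OF assms(2), of k m] BOutA by simp
    moreover have "m \<notin> fnP P" using fresh BOutA by simp
    ultimately obtain Q1 where "P \<sim>\<^sub>\<pi> Q1" "cpi_proc Q1" "L \<inter> out_fnP Q1 = {}" "m \<notin> fnP Q1"
      by (rule bisim_cpi_rename_away[OF Q assms(3)])
    with BOutA show thesis by (intro that) simp_all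
  qed (use Q that in simp_all)
  obtain Q' where Q': "trans Q1 a Q'" "P' \<sim>\<^sub>\<pi> Q'" using bisim_step[OF Q1(1) assms(2) Q1(3)] by blast
  have "bnA a \<inter> L = {}" using fresh by (cases a) auto
  then show ?thesis
    using cpi_trans[OF Q'(1) Q1(2)] Q'(2) Q1(4) unfolding cpi_bisim_avoiding_def by blast
qed

lemma cpi_bisim_avoiding_input:
  assumes "cpi_bisim_avoiding L P" "trans P (InA k l) P'" "l \<notin> fnP P" "finite L"
  shows "cpi_bisim_avoiding (insert l L) P'"
proof -
  obtain Q where Q: "P \<sim>\<^sub>\<pi> Q" "cpi_proc Q" "L \<inter> out_fnP Q = {}"
    using assms(1) by (auto simp: cpi_bisim_avoiding_def)
  have "is_chan l" using trans_object_chan[OF assms(2), of k l] by simp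
  then obtain Q1 where Q1: "P \<sim>\<^sub>\<pi> Q1" "cpi_proc Q1" "L \<inter> out_fnP Q1 = {}" "l \<notin> fnP Q1"
    by (rule bisim_cpi_rename_away[OF Q assms(4) _ assms(3)])
  obtain Q' where Q': "trans Q1 (InA k l) Q'" "P' \<sim>\<^sub>\<pi> Q'"
    using bisim_step[OF Q1(1) assms(2)] by auto
  have "cpi_proc Q'" "out_fnP Q' \<subseteq> out_fnP Q1" using cpi_trans[OF Q'(1) Q1(2)] by auto
  moreover have "l \<notin> out_fnP Q1" using Q1(4) out_fnP_subset_fnP by blast
  ultimately show ?thesis
    using Q'(2) Q1(3) unfolding cpi_bisim_avoiding_def by blast
qed

lemma cpi_bisim_avoiding_no_output:
  assumes "cpi_bisim_avoiding L P" "l \<in> L"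
  shows "\<not> trans P (OutA k l) P'"
proof
  assume out: "trans P (OutA k l) P'"
  obtain Q where Q: "P \<sim>\<^sub>\<pi> Q" "L \<inter> out_fnP Q = {}"
    using assms(1) by (auto simp: cpi_bisim_avoiding_def)
  obtain Q' where "trans Q (OutA k l) Q'" using bisim_step[OF Q(1) out] by auto
  then have "l \<in> out_fnP Q" by (rule trans_OutA_out_fnP)
  with Q(2) assms(2) show False by blast
qed

lemma trans_seq_step: "trans_seq ps as \<Longrightarrow> j < length as \<Longrightarrow> trans (ps ! j) (as ! j) (ps ! Suc j)"
  by (simp add: trans_seq_def)

lemma bouts_fresh_BOutA:
  assumes "bouts_fresh ps as" "j < length as" "as ! j = BOutA k m"
  shows "m \<notin> fnP (ps ! j)" and "i < j \<Longrightarrow> m \<notin> nA (as ! i)"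
  using assms unfolding bouts_fresh_def by blast+

lemma cpi_bisim_avoiding_trans_seq:
  assumes seq: "trans_seq ps as" "bouts_fresh ps as" and "finite L"
    and start: "cpi_bisim_avoiding L (ps ! i)"
    and avoid: "\<And>j k m. i \<le> j \<Longrightarrow> j < length as \<Longrightarrow> as ! j = BOutA k m \<Longrightarrow> m \<notin> L"
    and "i \<le> n" "n \<le> length as"
  shows "cpi_bisim_avoiding L (ps ! n)"
  using \<open>i \<le> n\<close>
proof (induction n rule: dec_induct)
  case base
  show ?case using start .
next
  case (step j)
  then have j: "i \<le> j" "j < length as" using \<open>n \<le> length as\<close> by auto
  have "trans (ps ! j) (as ! j) (ps ! Suc j)" using trans_seq_step[OF seq(1) j(2)] .
  moreover have "m \<notin> fnP (ps ! j) \<and> m \<notin> L" if "as ! j = BOutA k m" for k m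
    using bouts_fresh_BOutA(1)[OF seq(2) j(2) that] avoid[OF j that] by blast
  ultimately show ?case using cpi_bisim_avoiding_trans step(3) \<open>finite L\<close> by blast
qed

theorem proposition2:
  assumes "pi_proc P"
    and "\<exists>Q. cpi_proc Q \<and> P \<sim>\<^sub>\<pi> Q"
  shows "non_forwarding P"
  unfolding non_forwarding_def
proof (intro allI impI notI)
  fix ps as i k l j k'
  assume run: "trans_seq ps as \<and> ps ! 0 = P \<and> bouts_fresh ps as"
    and input: "Suc i < length as \<and> l \<notin> fnP (ps ! i) \<and> as ! i = InA k l"
    and ij: "i < j \<and> j < length as" and out: "as ! j = OutA k' l"
  from run have seq: "trans_seq ps as" "bouts_fresh ps as" by simp_all
  have "cpi_bisim_avoiding {} (ps ! 0)"
    using assms(2) run by (auto simp: cpi_bisim_avoiding_def)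
  then have "cpi_bisim_avoiding {} (ps ! i)"
    using cpi_bisim_avoiding_trans_seq[OF seq finite.emptyI, of 0 i] input by simp
  moreover have "trans (ps ! i) (InA k l) (ps ! Suc i)"
    using trans_seq_step[OF seq(1), of i] input by simp
  ultimately have "cpi_bisim_avoiding {l} (ps ! Suc i)"
    using cpi_bisim_avoiding_input input by blast
  moreover have "m \<notin> {l}" if "Suc i \<le> j'" "j' < length as" "as ! j' = BOutA k'' m" for j' k'' m
    using bouts_fresh_BOutA(2)[OF seq(2) that(2,3), of i] that(1) input by (simp add: nA_def)
  ultimately have "cpi_bisim_avoiding {l} (ps ! j)"
    using cpi_bisim_avoiding_trans_seq[OF seq, of "{l}" "Suc i" j] ij by simp
  moreover have "trans (ps ! j) (OutA k' l) (ps ! Suc j)"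
    using trans_seq_step[OF seq(1), of j] ij out by simp
  ultimately show False using cpi_bisim_avoiding_no_output by blast
qed

end
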